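(* Let $X$ be a discrete random variable with exactly $K\ge1$ mass points in $[0,1]$ and let $L>K$ be an integer. Then \[ \sum_{k=1}^{2L-2}\bigl(\mathbb E[\tilde T_k(X)]\bigr)^2\ \ge\ \frac{L-K}{4L}. \]
   Context: $\tilde T_k(x)=\cos(k\arccos(2x-1))$, $x\in[0,1]$, is the shifted Chebyshev polynomial of the first kind of degree $k$. *)

theory Defs
  imports "HOL-Probability.Probability"
begin

definition shifted_cheb :: "nat \<Rightarrow> real \<Rightarrow> real" where
  "shifted_cheb k x = cos (real k * arccos (2 * x - 1))"

end

theory Submission
  imports Defs
begin

(*
  The moments m_k = E[T~_k(X)] = sum_x w_x cos(k theta_x), with theta_x = arccos(2x - 1), are cosine
  moments of a measure with K atoms. For N = 2L - 2 estimate the squared Frobenius norm of the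
  Toeplitz matrix (m_|a-b|), 0 <= a, b <= N, in two ways. Each row contributes at most
  m_0^2 + 2T = 1 + 2T, where T = m_1^2 + ... + m_N^2 is the sum to be bounded. Expanding the squares instead gives
  sum_{x,y} w_x w_y Q(x,y) with Q(x,y) = sum_{a,b} cos((a-b) theta_x) cos((a-b) theta_y), which is half
  the sum of two values of |sum_a exp(i a phi)|^2; so Q >= 0 and Q(x,x) >= (N+1)^2/2. Keeping only the
  diagonal and using sum_x w_x^2 >= 1/K bounds the norm below by (N+1)^2/(2K). Hence
  1 + 2T >= (2L-1)/(2K), which implies T >= (L-K)/(4L).
*)

definition cos_moment :: "'a set \<Rightarrow> ('a \<Rightarrow> real) \<Rightarrow> ('a \<Rightarrow> real) \<Rightarrow> real \<Rightarrow> real" where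
  "cos_moment S w t r = (\<Sum>x\<in>S. w x * cos (r * t x))"

lemma cos_moment_minus [simp]: "cos_moment S w t (- r) = cos_moment S w t r"
  by (simp add: cos_moment_def)

lemma cos_moment_0 [simp]: "cos_moment S w t 0 = sum w S"
  by (simp add: cos_moment_def)

lemma double_sum_cos_diff:
  "(\<Sum>a\<le>N. \<Sum>b\<le>N. cos ((real a - real b) * \<phi>)) =
     (\<Sum>a\<le>N. cos (real a * \<phi>))\<^sup>2 + (\<Sum>a\<le>N. sin (real a * \<phi>))\<^sup>2"
proof -
  have "(\<Sum>a\<le>N. \<Sum>b\<le>N. cos ((real a - real b) * \<phi>)) =
        (\<Sum>a\<le>N. \<Sum>b\<le>N. cos (real a * \<phi>) * cos (real b * \<phi>) + sin (real a * \<phi>) * sin (real b * \<phi>))"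
    by (intro sum.cong refl) (simp add: left_diff_distrib cos_diff del: of_nat_diff)
  then show ?thesis
    by (simp add: power2_eq_square sum_product sum.distrib)
qed

lemma double_sum_cos_diff_nonneg: "0 \<le> (\<Sum>a\<le>N. \<Sum>b\<le>N. cos ((real a - real b) * \<phi>))"
  by (simp add: double_sum_cos_diff)

lemma double_sum_cos_diff_mult:
  "(\<Sum>a\<le>N. \<Sum>b\<le>N. cos ((real a - real b) * \<phi>) * cos ((real a - real b) * \<psi>)) =
     ((\<Sum>a\<le>N. \<Sum>b\<le>N. cos ((real a - real b) * (\<phi> + \<psi>))) +
      (\<Sum>a\<le>N. \<Sum>b\<le>N. cos ((real a - real b) * (\<phi> - \<psi>)))) / 2"
  by (simp add: cos_times_cos distrib_left right_diff_distrib sum.distrib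
      flip: sum_divide_distrib)

lemma double_sum_cos_diff_mult_nonneg:
  "0 \<le> (\<Sum>a\<le>N. \<Sum>b\<le>N. cos ((real a - real b) * \<phi>) * cos ((real a - real b) * \<psi>))"
  unfolding double_sum_cos_diff_mult
  by (intro divide_nonneg_pos add_nonneg_nonneg double_sum_cos_diff_nonneg) simp

lemma double_sum_cos_diff_square_ge:
  "(real N + 1)\<^sup>2 / 2 \<le> (\<Sum>a\<le>N. \<Sum>b\<le>N. cos ((real a - real b) * \<phi>) * cos ((real a - real b) * \<phi>))"
  unfolding double_sum_cos_diff_mult
  using double_sum_cos_diff_nonneg[where \<phi> = "\<phi> + \<phi>"] by (simp add: power2_eq_square add.commute)

lemma sum_weighted_sum_square:
  fixes w :: "'a \<Rightarrow> real" and f :: "'b \<Rightarrow> 'a \<Rightarrow> real"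
  shows "(\<Sum>p\<in>A. (\<Sum>x\<in>S. w x * f p x)\<^sup>2) = (\<Sum>x\<in>S. \<Sum>y\<in>S. w x * w y * (\<Sum>p\<in>A. f p x * f p y))"
proof -
  have "(\<Sum>p\<in>A. (\<Sum>x\<in>S. w x * f p x)\<^sup>2) = (\<Sum>p\<in>A. \<Sum>x\<in>S. \<Sum>y\<in>S. w x * w y * (f p x * f p y))"
    by (simp add: power2_eq_square sum_product mult_ac)
  also have "\<dots> = (\<Sum>x\<in>S. \<Sum>p\<in>A. \<Sum>y\<in>S. w x * w y * (f p x * f p y))"
    by (rule sum.swap)
  also have "\<dots> = (\<Sum>x\<in>S. \<Sum>y\<in>S. w x * w y * (\<Sum>p\<in>A. f p x * f p y))"
    by (simp add: sum.swap[of _ A] sum_distrib_left)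
  finally show ?thesis .
qed

lemma toeplitz_cos_moment_sum_square_ge:
  assumes "finite S" "S \<noteq> {}" "\<And>x. x \<in> S \<Longrightarrow> 0 \<le> w x" "sum w S = 1"
  shows "(real N + 1)\<^sup>2 / (2 * real (card S)) \<le>
           (\<Sum>a\<le>N. \<Sum>b\<le>N. (cos_moment S w t (real a - real b))\<^sup>2)"
proof -
  let ?Q = "\<lambda>x y. \<Sum>a\<le>N. \<Sum>b\<le>N. cos ((real a - real b) * t x) * cos ((real a - real b) * t y)"
  have inv_card_le: "1 / real (card S) \<le> (\<Sum>x\<in>S. (w x)\<^sup>2)"
    using sum_squared_le_sum_of_squares[of w S] assms(1,2,4) by (simp add: field_simps card_gt_0_iff)
  have "(real N + 1)\<^sup>2 / (2 * real (card S)) \<le> (\<Sum>x\<in>S. (w x)\<^sup>2) * ((real N + 1)\<^sup>2 / 2)"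
    using mult_right_mono[OF inv_card_le, of "(real N + 1)\<^sup>2 / 2"] by simp
  also have "\<dots> \<le> (\<Sum>x\<in>S. w x * w x * ?Q x x)"
    unfolding sum_distrib_right power2_eq_square[of "w _"]
    by (intro sum_mono mult_left_mono double_sum_cos_diff_square_ge) simp
  also have "\<dots> \<le> (\<Sum>x\<in>S. \<Sum>y\<in>S. w x * w y * ?Q x y)"
  proof (intro sum_mono member_le_sum)
    show "0 \<le> w x * w y * ?Q x y" if "x \<in> S" "y \<in> S - {x}" for x y
      using that assms(3) by (simp add: double_sum_cos_diff_mult_nonneg)
  qed (use assms(1) in auto)
  also have "\<dots> = (\<Sum>a\<le>N. \<Sum>b\<le>N. (cos_moment S w t (real a - real b))\<^sup>2)"
    using sum_weighted_sum_square[of w "\<lambda>(a, b) x. cos ((real a - real b) * t x)" S "{..N} \<times> {..N}"]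
    by (simp add: cos_moment_def sum.cartesian_product')
  finally show ?thesis .
qed

lemma sum_even_shift_le:
  fixes g :: "real \<Rightarrow> real"
  assumes nonneg: "\<And>r. 0 \<le> g r" and even: "\<And>r. g (- r) = g r" and "a \<le> N"
  shows "(\<Sum>b\<le>N. g (real a - real b)) \<le> g 0 + 2 * (\<Sum>k=1..N. g (real k))"
proof -
  have "(\<Sum>b\<le>a. g (real a - real b)) = (\<Sum>k\<in>(\<lambda>b. a - b) ` {..a}. g (real k))"
    by (subst sum.reindex) (auto simp: inj_on_def of_nat_diff)
  also have "\<dots> \<le> (\<Sum>k\<le>N. g (real k))"
    by (rule sum_mono2) (use assms in auto)
  also have "\<dots> = g 0 + (\<Sum>k=1..N. g (real k))"
    by (simp add: atMost_atLeast0 sum.atLeast_Suc_atMost)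
  finally have lower_half: "(\<Sum>b\<le>a. g (real a - real b)) \<le> g 0 + (\<Sum>k=1..N. g (real k))" .
  have "(\<Sum>b\<in>{a<..N}. g (real a - real b)) = (\<Sum>b\<in>{a<..N}. g (real (b - a)))"
    by (intro sum.cong refl) (metis even greaterThanAtMost_iff less_imp_le minus_diff_eq of_nat_diff)
  also have "\<dots> = (\<Sum>k\<in>(\<lambda>b. b - a) ` {a<..N}. g (real k))"
    by (subst sum.reindex) (auto simp: inj_on_def)
  also have "\<dots> \<le> (\<Sum>k=1..N. g (real k))"
    by (rule sum_mono2) (use nonneg in auto)
  finally have upper_half: "(\<Sum>b\<in>{a<..N}. g (real a - real b)) \<le> (\<Sum>k=1..N. g (real k))" .
  have "{..N} = {..a} \<union> {a<..N}"
    using \<open>a \<le> N\<close> by auto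
  then have "(\<Sum>b\<le>N. g (real a - real b)) =
               (\<Sum>b\<le>a. g (real a - real b)) + (\<Sum>b\<in>{a<..N}. g (real a - real b))"
    by (simp add: sum.union_disjoint ivl_disj_int)
  with lower_half upper_half show ?thesis
    by linarith
qed

lemma cos_moment_sum_square_ge:
  assumes "finite S" "S \<noteq> {}" "\<And>x. x \<in> S \<Longrightarrow> 0 \<le> w x" "sum w S = 1"
  shows "(real N + 1) / (2 * real (card S)) \<le> 1 + 2 * (\<Sum>k=1..N. (cos_moment S w t (real k))\<^sup>2)"
    (is "_ \<le> ?row")
proof -
  have "(real N + 1)\<^sup>2 / (2 * real (card S)) \<le>
          (\<Sum>a\<le>N. \<Sum>b\<le>N. (cos_moment S w t (real a - real b))\<^sup>2)"
    by (rule toeplitz_cos_moment_sum_square_ge[OF assms])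
  also have "\<dots> \<le> (\<Sum>a\<le>N. ?row)"
    using sum_even_shift_le[where g = "\<lambda>r. (cos_moment S w t r)\<^sup>2" and N = N] assms(4)
    by (intro sum_mono) simp
  also have "\<dots> = (real N + 1) * ?row"
    by simp
  finally have "(real N + 1) * ((real N + 1) / (2 * real (card S))) \<le> (real N + 1) * ?row"
    by (simp add: power2_eq_square)
  then show ?thesis
    by (rule mult_left_le_imp_le) simp
qed

lemma chebyshev_bound_arith:
  fixes K L T :: real
  assumes "1 \<le> K" "K + 1 \<le> L" "(2 * L - 1) / (2 * K) \<le> 1 + 2 * T"
  shows "(L - K) / (4 * L) \<le> T"
proof -
  have "L \<le> (2 * L - K) * (L - K)"
    using mult_mono[of "L + 1" "2 * L - K" 1 "L - K"] assms(1,2) by simp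
  then have "2 * ((L - K) / (4 * L)) + 1 \<le> (2 * L - 1) / (2 * K)"
    using assms(1,2) by (simp add: field_simps)
  with assms(3) show ?thesis
    by linarith
qed

theorem mainTheorem12:
  fixes p :: "real pmf" and K L :: nat
  assumes "finite (set_pmf p)"
    and "card (set_pmf p) = K"
    and "K \<ge> 1"
    and "set_pmf p \<subseteq> {0..1}"
    and "L > K"
  shows "(\<Sum>k = 1..2 * L - 2. (measure_pmf.expectation p (shifted_cheb k))\<^sup>2)
           \<ge> (real L - real K) / (4 * real L)"
proof -
  define \<theta> where "\<theta> x = arccos (2 * x - 1)" for x :: real
  have expectation_eq:
    "measure_pmf.expectation p (shifted_cheb k) = cos_moment (set_pmf p) (pmf p) \<theta> (real k)" for k
    using assms(1)
    by (simp add: integral_measure_pmf_real[where A = "set_pmf p"] cos_moment_def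
        shifted_cheb_def \<theta>_def mult.commute)
  have "real (2 * L - 2) + 1 = 2 * real L - 1"
    using assms(3,5) by (simp add: of_nat_diff)
  then have "(2 * real L - 1) / (2 * real K) \<le>
               1 + 2 * (\<Sum>k = 1..2 * L - 2. (measure_pmf.expectation p (shifted_cheb k))\<^sup>2)"
    using cos_moment_sum_square_ge[of "set_pmf p" "pmf p" "2 * L - 2" \<theta>] assms(1,2)
    by (simp add: expectation_eq sum_pmf_eq_1 set_pmf_not_empty)
  then show ?thesis
    by (rule chebyshev_bound_arith[rotated 2]) (use assms(3,5) in auto)
qed

end
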